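(* For $n\ge 1$, the graph $\mathcal{SP}_L(IS_n)$ is isomorphic to the intersection graph of the non-empty subsets of an $n$-element set, i.e. the simple graph whose vertices are the non-empty subsets of $\{1,\dots,n\}$, two distinct subsets being adjacent iff they intersect.
   Context: $IS_n$ is the set of all partial injective maps of an $n$-element set $X$, with composition written left to right ($\alpha\beta$ means first $\alpha$, then $\beta$); its zero is the empty map. For $a\in IS_n$, $S^1a=\{sa:s\in IS_n\}\cup\{a\}$. $\mathcal{P}_L(IS_n)$ is the simple graph on the non-empty partial injections with distinct $a,b$ adjacent iff $S^1a\cap S^1b$ contains a non-empty map. $L_a$ is the Green $\mathcal{L}$-class of $a$ ($a\,\mathcal{L}\,b$ iff $S^1a=S^1b$). $\mathcal{SP}_L(IS_n)$ is the simple graph with vertex set $\{L_a: a \text{ non-empty}\}$, distinct $L_a,L_b$ adjacent iff $a,b$ are adjacent in $\mathcal{P}_L(IS_n)$. *)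

theory Defs
  imports Main
begin

definition IS :: "nat \<Rightarrow> (nat \<Rightarrow> nat option) set" where
  "IS n = {a. dom a \<subseteq> {1..n} \<and> ran a \<subseteq> {1..n} \<and> inj_on a (dom a)}"

text \<open>Left-to-right composition: pcomp a b means first a, then b.\<close>
definition pcomp :: "(nat \<Rightarrow> nat option) \<Rightarrow> (nat \<Rightarrow> nat option) \<Rightarrow> (nat \<Rightarrow> nat option)" where
  "pcomp a b = b \<circ>\<^sub>m a"

definition S1 :: "nat \<Rightarrow> (nat \<Rightarrow> nat option) \<Rightarrow> (nat \<Rightarrow> nat option) set" where
  "S1 n a = {pcomp s a | s. s \<in> IS n} \<union> {a}"

definition PL_vertices :: "nat \<Rightarrow> (nat \<Rightarrow> nat option) set" where
  "PL_vertices n = IS n - {Map.empty}"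

definition PL_adj :: "nat \<Rightarrow> (nat \<Rightarrow> nat option) \<Rightarrow> (nat \<Rightarrow> nat option) \<Rightarrow> bool" where
  "PL_adj n a b \<longleftrightarrow> a \<noteq> b \<and> (\<exists>c \<in> S1 n a \<inter> S1 n b. c \<noteq> Map.empty)"

definition Lclass :: "nat \<Rightarrow> (nat \<Rightarrow> nat option) \<Rightarrow> (nat \<Rightarrow> nat option) set" where
  "Lclass n a = {b \<in> IS n. S1 n b = S1 n a}"

definition SPL_vertices :: "nat \<Rightarrow> (nat \<Rightarrow> nat option) set set" where
  "SPL_vertices n = {Lclass n a | a. a \<in> PL_vertices n}"

definition SPL_adj :: "nat \<Rightarrow> (nat \<Rightarrow> nat option) set \<Rightarrow> (nat \<Rightarrow> nat option) set \<Rightarrow> bool" where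
  "SPL_adj n C D \<longleftrightarrow> C \<noteq> D \<and>
     (\<exists>a \<in> PL_vertices n. \<exists>b \<in> PL_vertices n. C = Lclass n a \<and> D = Lclass n b \<and> PL_adj n a b)"

definition Int_vertices :: "nat \<Rightarrow> nat set set" where
  "Int_vertices n = {A. A \<subseteq> {1..n} \<and> A \<noteq> {}}"

definition Int_adj :: "nat set \<Rightarrow> nat set \<Rightarrow> bool" where
  "Int_adj A B \<longleftrightarrow> A \<noteq> B \<and> A \<inter> B \<noteq> {}"

definition graph_iso :: "'a set \<Rightarrow> ('a \<Rightarrow> 'a \<Rightarrow> bool) \<Rightarrow> 'b set \<Rightarrow> ('b \<Rightarrow> 'b \<Rightarrow> bool) \<Rightarrow> ('a \<Rightarrow> 'b) \<Rightarrow> bool" where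
  "graph_iso V E W F f \<longleftrightarrow> bij_betw f V W \<and> (\<forall>x\<in>V. \<forall>y\<in>V. E x y \<longleftrightarrow> F (f x) (f y))"

definition graphs_isomorphic :: "'a set \<Rightarrow> ('a \<Rightarrow> 'a \<Rightarrow> bool) \<Rightarrow> 'b set \<Rightarrow> ('b \<Rightarrow> 'b \<Rightarrow> bool) \<Rightarrow> bool" where
  "graphs_isomorphic V E W F \<longleftrightarrow> (\<exists>f. graph_iso V E W F f)"

end

theory Submission
  imports Defs
begin

text \<open>The left ideal generated by a partial injection a consists of all partial injections whose
  image is contained in that of a: any such b factors as b = (b a\<inverse>) a. Hence two partial
  injections are L-related iff they have the same image, so L-classes correspond to the non-empty
  images, i.e. to the non-empty subsets of {1..n}. Two non-empty maps a and b have a common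
  non-empty left multiple iff their images meet: if x lies in both images, the partial identity
  on {x} is a left multiple of both; conversely, the image of a common left multiple is contained
  in both images.\<close>

lemma ran_map_comp_subset: "ran (f \<circ>\<^sub>m g) \<subseteq> ran f"
  by (auto simp: ran_def map_comp_Some_iff)

lemma dom_map_comp_subset: "dom (f \<circ>\<^sub>m g) \<subseteq> dom g"
  by (auto simp: map_comp_Some_iff)

lemma inj_on_map_comp:
  assumes "inj_on f (dom f)" and "inj_on g (dom g)"
  shows "inj_on (f \<circ>\<^sub>m g) (dom (f \<circ>\<^sub>m g))"
proof (rule inj_onI)
  fix x y assume "x \<in> dom (f \<circ>\<^sub>m g)" "y \<in> dom (f \<circ>\<^sub>m g)" "(f \<circ>\<^sub>m g) x = (f \<circ>\<^sub>m g) y"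
  then obtain u v z where "g x = Some u" "g y = Some v" "f u = Some z" "f v = Some z"
    by (auto simp: map_comp_Some_iff)
  with assms show "x = y" by (metis domI inj_onD)
qed

lemma pcomp_in_IS: "s \<in> IS n \<Longrightarrow> a \<in> IS n \<Longrightarrow> pcomp s a \<in> IS n"
  using dom_map_comp_subset[of a s] ran_map_comp_subset[of a s] inj_on_map_comp[of a s]
  by (auto simp: IS_def pcomp_def)

lemma ran_IS_subset: "a \<in> IS n \<Longrightarrow> ran a \<subseteq> {1..n}"
  by (simp add: IS_def)

lemma ran_empty_iff: "ran a = {} \<longleftrightarrow> a = Map.empty"
  by (auto simp: ran_def fun_eq_iff) (meson not_Some_eq)

lemma ran_restrict_Some [simp]: "ran (Some |` A) = A"
  by (auto simp: ran_def restrict_map_def)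

lemma restrict_Some_in_IS: "A \<subseteq> {1..n} \<Longrightarrow> Some |` A \<in> IS n"
  by (simp add: IS_def) (simp add: inj_on_def restrict_map_def)

definition pinv :: "('a \<rightharpoonup> 'b) \<Rightarrow> ('b \<rightharpoonup> 'a)" where
  "pinv a y = (if y \<in> ran a then Some (SOME x. a x = Some y) else None)"

lemma pinv_SomeD: "pinv a y = Some x \<Longrightarrow> a x = Some y"
  unfolding pinv_def ran_def by (auto split: if_splits intro: someI)

lemma dom_pinv: "dom (pinv a) = ran a"
  by (auto simp: pinv_def split: if_splits)

lemma ran_pinv_subset: "ran (pinv a) \<subseteq> dom a"
  by (auto simp: ran_def dest: pinv_SomeD)

lemma inj_on_pinv: "inj_on (pinv a) (dom (pinv a))"
  by (fastforce simp: inj_on_def dest: pinv_SomeD)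

lemma pinv_in_IS: "a \<in> IS n \<Longrightarrow> pinv a \<in> IS n"
  using dom_pinv[of a] ran_pinv_subset[of a] inj_on_pinv[of a] by (auto simp: IS_def)

lemma pcomp_pinv_cancel:
  assumes "ran b \<subseteq> ran a"
  shows "pcomp (pcomp b (pinv a)) a = b"
proof
  fix x
  show "pcomp (pcomp b (pinv a)) a x = b x"
  proof (cases "b x")
    case (Some y)
    then have "y \<in> ran a" using assms by (auto simp: ran_def)
    then obtain z where z: "pinv a y = Some z" by (auto simp: pinv_def)
    then have "a z = Some y" by (rule pinv_SomeD)
    with Some z show ?thesis by (simp add: pcomp_def)
  qed (simp add: pcomp_def)
qed

lemma S1_eq:
  assumes "a \<in> IS n"
  shows "S1 n a = {b \<in> IS n. ran b \<subseteq> ran a}"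
proof
  show "S1 n a \<subseteq> {b \<in> IS n. ran b \<subseteq> ran a}"
    using assms pcomp_in_IS ran_map_comp_subset[of a] by (fastforce simp: S1_def pcomp_def)
next
  show "{b \<in> IS n. ran b \<subseteq> ran a} \<subseteq> S1 n a"
  proof clarify
    fix b assume "b \<in> IS n" and "ran b \<subseteq> ran a"
    then have "pcomp b (pinv a) \<in> IS n" and "pcomp (pcomp b (pinv a)) a = b"
      using assms by (simp_all add: pcomp_in_IS pinv_in_IS pcomp_pinv_cancel)
    then show "b \<in> S1 n a"
      unfolding S1_def by (intro UnI1 CollectI exI[of _ "pcomp b (pinv a)"]) simp
  qed
qed

lemma S1_eq_iff_ran_eq:
  assumes "a \<in> IS n" and "b \<in> IS n"
  shows "S1 n a = S1 n b \<longleftrightarrow> ran a = ran b"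
  using assms by (auto simp: S1_eq)

lemma Lclass_eq:
  assumes "a \<in> IS n"
  shows "Lclass n a = {b \<in> IS n. ran b = ran a}"
  unfolding Lclass_def using S1_eq_iff_ran_eq[OF _ assms] by blast

lemma Lclass_eq_iff_ran_eq:
  assumes "a \<in> IS n" and "b \<in> IS n"
  shows "Lclass n a = Lclass n b \<longleftrightarrow> ran a = ran b"
  using assms by (auto simp: Lclass_eq)

lemma PL_adj_iff:
  assumes "a \<in> IS n" and "b \<in> IS n"
  shows "PL_adj n a b \<longleftrightarrow> a \<noteq> b \<and> ran a \<inter> ran b \<noteq> {}"
proof
  assume "PL_adj n a b"
  then obtain c where "a \<noteq> b" "c \<in> S1 n a" "c \<in> S1 n b" "c \<noteq> Map.empty"
    by (auto simp: PL_adj_def)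
  then show "a \<noteq> b \<and> ran a \<inter> ran b \<noteq> {}"
    using assms ran_empty_iff[of c] by (auto simp: S1_eq)
next
  assume adj: "a \<noteq> b \<and> ran a \<inter> ran b \<noteq> {}"
  then obtain x where x: "x \<in> ran a" "x \<in> ran b" by auto
  then have "Some |` {x} \<in> IS n"
    using assms by (auto dest: ran_IS_subset intro: restrict_Some_in_IS)
  with x assms have "Some |` {x} \<in> S1 n a \<inter> S1 n b" "Some |` {x} \<noteq> Map.empty"
    by (auto simp: S1_eq simp flip: ran_empty_iff)
  with adj show "PL_adj n a b" unfolding PL_adj_def by blast
qed

lemma PL_vertices_subset_IS: "PL_vertices n \<subseteq> IS n"
  by (simp add: PL_vertices_def)

lemma SPL_adj_Lclass_iff:
  assumes "a \<in> PL_vertices n" and "b \<in> PL_vertices n"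
  shows "SPL_adj n (Lclass n a) (Lclass n b) \<longleftrightarrow> ran a \<noteq> ran b \<and> ran a \<inter> ran b \<noteq> {}"
proof
  assume "SPL_adj n (Lclass n a) (Lclass n b)"
  then obtain a' b' where "a' \<in> PL_vertices n" "b' \<in> PL_vertices n"
    and "Lclass n a = Lclass n a'" "Lclass n b = Lclass n b'"
    and "Lclass n a \<noteq> Lclass n b" and "PL_adj n a' b'"
    unfolding SPL_adj_def by blast
  moreover have "a \<in> IS n" "b \<in> IS n" "a' \<in> IS n" "b' \<in> IS n"
    using assms \<open>a' \<in> PL_vertices n\<close> \<open>b' \<in> PL_vertices n\<close> PL_vertices_subset_IS by blast+
  ultimately show "ran a \<noteq> ran b \<and> ran a \<inter> ran b \<noteq> {}"
    by (simp add: Lclass_eq_iff_ran_eq PL_adj_iff)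
next
  assume "ran a \<noteq> ran b \<and> ran a \<inter> ran b \<noteq> {}"
  moreover have "a \<in> IS n" "b \<in> IS n" using assms PL_vertices_subset_IS by blast+
  ultimately have "Lclass n a \<noteq> Lclass n b" and "PL_adj n a b"
    by (auto simp: Lclass_eq_iff_ran_eq PL_adj_iff)
  with assms show "SPL_adj n (Lclass n a) (Lclass n b)"
    unfolding SPL_adj_def by blast
qed

definition Lclass_ran :: "(nat \<rightharpoonup> nat) set \<Rightarrow> nat set" where
  "Lclass_ran C = \<Union> (ran ` C)"

lemma Lclass_ran_Lclass: "a \<in> IS n \<Longrightarrow> Lclass_ran (Lclass n a) = ran a"
  by (auto simp: Lclass_ran_def Lclass_eq)

lemma bij_betw_Lclass_ran: "bij_betw Lclass_ran (SPL_vertices n) (Int_vertices n)"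
proof (rule bij_betw_byWitness[where f' = "\<lambda>A. Lclass n (Some |` A)"])
  show "\<forall>C \<in> SPL_vertices n. Lclass n (Some |` Lclass_ran C) = C"
  proof
    fix C assume "C \<in> SPL_vertices n"
    then obtain a where "a \<in> IS n" and C: "C = Lclass n a"
      by (auto simp: SPL_vertices_def PL_vertices_def)
    moreover from this have "Some |` ran a \<in> IS n"
      by (intro restrict_Some_in_IS ran_IS_subset)
    ultimately show "Lclass n (Some |` Lclass_ran C) = C"
      by (simp add: Lclass_ran_Lclass Lclass_eq_iff_ran_eq)
  qed
  show "\<forall>A \<in> Int_vertices n. Lclass_ran (Lclass n (Some |` A)) = A"
    by (simp add: Int_vertices_def Lclass_ran_Lclass restrict_Some_in_IS)
  show "Lclass_ran ` SPL_vertices n \<subseteq> Int_vertices n"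
  proof clarify
    fix C assume "C \<in> SPL_vertices n"
    then obtain a where a: "a \<in> IS n" "a \<noteq> Map.empty" and "C = Lclass n a"
      by (auto simp: SPL_vertices_def PL_vertices_def)
    moreover from a(1) have "ran a \<subseteq> {1..n}" by (rule ran_IS_subset)
    ultimately show "Lclass_ran C \<in> Int_vertices n"
      by (simp add: Int_vertices_def Lclass_ran_Lclass ran_empty_iff)
  qed
  show "(\<lambda>A. Lclass n (Some |` A)) ` Int_vertices n \<subseteq> SPL_vertices n"
    by (auto simp: SPL_vertices_def PL_vertices_def Int_vertices_def restrict_Some_in_IS
        simp flip: ran_empty_iff)
qed

theorem mainTheorem16:
  fixes n :: nat
  assumes "n \<ge> 1"
  shows "graphs_isomorphic (SPL_vertices n) (SPL_adj n) (Int_vertices n) Int_adj"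
  unfolding graphs_isomorphic_def graph_iso_def
proof (intro exI conjI ballI)
  show "bij_betw Lclass_ran (SPL_vertices n) (Int_vertices n)"
    by (rule bij_betw_Lclass_ran)
next
  fix C D assume "C \<in> SPL_vertices n" and "D \<in> SPL_vertices n"
  then obtain a b where "a \<in> PL_vertices n" "b \<in> PL_vertices n"
    and "C = Lclass n a" "D = Lclass n b"
    by (auto simp: SPL_vertices_def)
  then show "SPL_adj n C D \<longleftrightarrow> Int_adj (Lclass_ran C) (Lclass_ran D)"
    by (simp add: SPL_adj_Lclass_iff Lclass_ran_Lclass PL_vertices_def Int_adj_def)
qed

end
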